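(* Let $(K_n,\Sigma)$ be a signed complete graph with $n\geq4$, and let $Y(\Sigma)$ be the set of edges $vw$ of $K_n$ such that for every $u\in V(K_n)\setminus\{v,w\}$, the triangle $uvw$ is odd and the number of odd triangles containing $u$ and $v$ is one more than the number of even triangles containing $u$ and $v$. Then $|Y(\Sigma)|\leq1$.
   Context: A signed graph is a pair $(G,\Sigma)$ with $G$ a finite simple graph and $\Sigma\subseteq E(G)$ (the odd edges). A triangle $uvw$ is odd (resp. even) if $|\Sigma\cap\{uv,uw,vw\}|$ is odd (resp. even). *)

theory Defs
  imports Main
begin

text \<open>Signed complete graph on a finite vertex set V: edges are the 2-element subsets
  of V; the signature Sigma is a set of edges (the odd edges).\<close>

definition edges_K :: "'a set \<Rightarrow> 'a set set" where
  "edges_K V = {e. \<exists>v w. e = {v, w} \<and> v \<in> V \<and> w \<in> V \<and> v \<noteq> w}"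

definition odd_triangle :: "'a set set \<Rightarrow> 'a \<Rightarrow> 'a \<Rightarrow> 'a \<Rightarrow> bool" where
  "odd_triangle \<Sigma> u v w \<longleftrightarrow> odd (card (\<Sigma> \<inter> {{u, v}, {u, w}, {v, w}}))"

definition n_odd_tri :: "'a set \<Rightarrow> 'a set set \<Rightarrow> 'a \<Rightarrow> 'a \<Rightarrow> nat" where
  "n_odd_tri V \<Sigma> u v = card {x \<in> V - {u, v}. odd_triangle \<Sigma> u v x}"

definition n_even_tri :: "'a set \<Rightarrow> 'a set set \<Rightarrow> 'a \<Rightarrow> 'a \<Rightarrow> nat" where
  "n_even_tri V \<Sigma> u v = card {x \<in> V - {u, v}. \<not> odd_triangle \<Sigma> u v x}"

definition Y_set :: "'a set \<Rightarrow> 'a set set \<Rightarrow> 'a set set" where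
  "Y_set V \<Sigma> = {e. \<exists>v w. e = {v, w} \<and> v \<in> V \<and> w \<in> V \<and> v \<noteq> w \<and>
      (\<forall>u \<in> V - {v, w}. odd_triangle \<Sigma> u v w \<and>
          n_odd_tri V \<Sigma> u v = n_even_tri V \<Sigma> u v + 1)}"

end

theory Submission
  imports Defs
begin

text \<open>Call a pair \<open>{u, v}\<close> balanced if it lies in one more odd than even triangle, i.e. in
  exactly \<open>(|V| - 1) / 2\<close> odd triangles. An edge \<open>vw\<close> of \<open>Y(\<Sigma>)\<close> makes every triangle on
  \<open>vw\<close> odd, so (as \<open>|V| \<ge> 4\<close>) \<open>{v, w}\<close> itself is not balanced, while every pair \<open>{u, v}\<close> with \<open>u \<noteq> w\<close> is.
  The four triangles on four vertices contain an even number of odd ones; for a triangle \<open>abc\<close>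
  whose three pairs are balanced this turns the three counts into \<open>|V| = 4k + 3\<close> if \<open>abc\<close> is
  odd and \<open>|V| = 4k + 1\<close> if it is even.

  Given two different edges \<open>vw\<close> and \<open>v'w'\<close> of \<open>Y(\<Sigma>)\<close>, these facts first force the four
  endpoints to be distinct. Then the balanced pair \<open>{v, v'}\<close> gives a contradiction: if
  \<open>|V| \<equiv> 3 (mod 4)\<close> all triangles on it are odd; otherwise only \<open>vv'w\<close> and \<open>vv'w'\<close> are, so
  \<open>|V| = 5\<close>, and the fifth vertex \<open>u\<close> lies in at most one odd triangle with \<open>v\<close>.\<close>

lemma card_Collect_eq_sum_of_bool:
  "finite A \<Longrightarrow> card {x \<in> A. P x} = (\<Sum>x\<in>A. of_bool (P x))"
  by (simp add: Collect_conj_eq Int_commute)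

lemma card_Collect_not:
  assumes "finite A"
  shows "card {x \<in> A. P x} + card {x \<in> A. \<not> P x} = card A"
proof -
  have "(\<Sum>x\<in>A. of_bool (P x)) + (\<Sum>x\<in>A. of_bool (\<not> P x)) = card A"
    by (simp only: card_eq_sum flip: sum.distrib) (rule sum.cong; simp)
  then show ?thesis by (simp only: card_Collect_eq_sum_of_bool[OF assms])
qed

lemma card_Collect_xor:
  assumes "finite A"
  shows "card {x \<in> A. P x \<noteq> Q x} + 2 * card {x \<in> A. P x \<and> Q x} = card {x \<in> A. P x} + card {x \<in> A. Q x}"
proof -
  have "(\<Sum>x\<in>A. of_bool (P x \<noteq> Q x)) + 2 * (\<Sum>x\<in>A. of_bool (P x \<and> Q x)) =
      (\<Sum>x\<in>A. of_bool (P x)) + (\<Sum>x\<in>A. of_bool (Q x) :: nat)"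
    by (simp only: sum_distrib_left flip: sum.distrib) (rule sum.cong; auto)
  then show ?thesis by (simp only: card_Collect_eq_sum_of_bool[OF assms])
qed

lemma odd_triangle_commute:
  "odd_triangle S b a c = odd_triangle S a b c"
  "odd_triangle S a c b = odd_triangle S a b c"
  unfolding odd_triangle_def by (simp_all add: insert_commute)

lemma odd_triangle_iff_edges:
  assumes "distinct [a, b, c]"
  shows "odd_triangle S a b c \<longleftrightarrow> ({a, b} \<in> S \<longleftrightarrow> ({a, c} \<in> S \<longleftrightarrow> {b, c} \<in> S))"
  using assms
  by (cases "{a, b} \<in> S"; cases "{a, c} \<in> S"; cases "{b, c} \<in> S")
     (simp_all add: odd_triangle_def Int_insert_right doubleton_eq_iff)

text \<open>The four triangles on four vertices use every edge twice, so an even number of them is odd.\<close>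
lemma odd_triangle_four_points:
  assumes "distinct [a, b, c, d]"
  shows "odd_triangle S a b c \<noteq> odd_triangle S a b d \<longleftrightarrow> odd_triangle S a c d \<noteq> odd_triangle S b c d"
  using assms by (simp add: odd_triangle_iff_edges insert_commute) blast

lemma n_odd_tri_insert:
  assumes "finite V" "c \<in> V - {a, b}"
  shows "n_odd_tri V S a b = of_bool (odd_triangle S a b c) + card {x \<in> V - {a, b, c}. odd_triangle S a b x}"
proof -
  let ?odd_rest = "{x \<in> V - {a, b, c}. odd_triangle S a b x}"
  have "{x \<in> V - {a, b}. odd_triangle S a b x} =
      (if odd_triangle S a b c then insert c ?odd_rest else ?odd_rest)"
    using assms(2) by auto
  then show ?thesis unfolding n_odd_tri_def using assms(1) by simp
qed

definition balanced_pair :: "'a set \<Rightarrow> 'a set set \<Rightarrow> 'a \<Rightarrow> 'a \<Rightarrow> bool" where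
  "balanced_pair V S u v \<longleftrightarrow> n_odd_tri V S u v = n_even_tri V S u v + 1"

lemma balanced_pair_iff_card:
  assumes "finite V" "u \<in> V" "v \<in> V" "u \<noteq> v"
  shows "balanced_pair V S u v \<longleftrightarrow> 2 * n_odd_tri V S u v + 1 = card V"
proof -
  have "n_odd_tri V S u v + n_even_tri V S u v = card (V - {u, v})"
    unfolding n_odd_tri_def n_even_tri_def by (rule card_Collect_not) (use assms(1) in simp)
  also have "\<dots> = card V - 2" using assms by (simp add: card_Diff_subset)
  finally have "n_odd_tri V S u v + n_even_tri V S u v = card V - 2" .
  moreover have "card {u, v} \<le> card V" using assms by (intro card_mono) auto
  ultimately show ?thesis unfolding balanced_pair_def using assms(4) by auto
qed

lemma balanced_pair_commute: "balanced_pair V S v u \<longleftrightarrow> balanced_pair V S u v"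
  unfolding balanced_pair_def n_odd_tri_def n_even_tri_def
  by (simp add: odd_triangle_commute insert_commute)

lemma balanced_pair_has_even_triangle:
  assumes "finite V" "card V \<ge> 4" "u \<in> V" "v \<in> V" "u \<noteq> v" "balanced_pair V S u v"
  shows "\<exists>x \<in> V - {u, v}. \<not> odd_triangle S u v x"
proof (rule ccontr)
  assume "\<not> ?thesis"
  then have "n_odd_tri V S u v = card (V - {u, v})" unfolding n_odd_tri_def
    by (metis (mono_tags, lifting) Collect_cong Collect_mem_eq)
  also have "\<dots> = card V - 2" using assms by (simp add: card_Diff_subset)
  finally show False using assms balanced_pair_iff_card by fastforce
qed

lemma balanced_triangle_odd_iff:
  assumes "finite V" "a \<in> V" "b \<in> V" "c \<in> V" "distinct [a, b, c]"
    and "balanced_pair V S a b" "balanced_pair V S a c" "balanced_pair V S b c"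
  shows "odd_triangle S a b c \<longleftrightarrow> card V mod 4 = 3"
proof -
  define T where "T = V - {a, b, c}"
  define P where "P x \<longleftrightarrow> odd_triangle S a b x" for x
  define Q where "Q x \<longleftrightarrow> odd_triangle S a c x" for x
  define t where "t \<longleftrightarrow> odd_triangle S a b c"
  have "finite T" using assms(1) unfolding T_def by simp
  have "card {a, b, c} \<le> card V" using assms(1-4) by (intro card_mono) auto
  then have card_T: "card T + 3 = card V"
    using assms(1-5) unfolding T_def by (simp add: card_Diff_subset)
  have third: "c \<in> V - {a, b}" "b \<in> V - {a, c}" "a \<in> V - {b, c}" using assms(2-5) by auto
  have ab: "2 * (of_bool t + card {x \<in> T. P x}) + 1 = card V"
    using assms balanced_pair_iff_card[of V a b S] n_odd_tri_insert[OF assms(1) third(1)]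
    unfolding T_def P_def t_def by simp
  have ac: "2 * (of_bool t + card {x \<in> T. Q x}) + 1 = card V"
    using assms balanced_pair_iff_card[of V a c S] n_odd_tri_insert[OF assms(1) third(2)]
    unfolding T_def Q_def t_def by (simp add: insert_commute odd_triangle_commute)
  have "odd_triangle S b c x \<longleftrightarrow> (t \<longleftrightarrow> P x = Q x)" if "x \<in> T" for x
    using odd_triangle_four_points[of a b c x S] that assms(5)
    unfolding T_def P_def Q_def t_def by auto
  then have "{x \<in> V - {b, c, a}. odd_triangle S b c x} = {x \<in> T. t \<longleftrightarrow> P x = Q x}"
    unfolding T_def by (auto simp: insert_commute)
  then have bc: "2 * (of_bool t + card {x \<in> T. t \<longleftrightarrow> P x = Q x}) + 1 = card V"
    using assms balanced_pair_iff_card[of V b c S] n_odd_tri_insert[OF assms(1) third(3)]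
    unfolding t_def by (simp add: odd_triangle_commute)
  have "card {x \<in> T. P x \<noteq> Q x} + 2 * card {x \<in> T. P x \<and> Q x} = card {x \<in> T. P x} + card {x \<in> T. Q x}"
    using card_Collect_xor[OF \<open>finite T\<close>] .
  moreover have "card {x \<in> T. P x \<noteq> Q x} + card {x \<in> T. \<not> P x \<noteq> Q x} = card T"
    using card_Collect_not[OF \<open>finite T\<close>] .
  ultimately have "card V = 4 * card {x \<in> T. P x \<and> Q x} + (if t then 3 else 1)"
    using ab ac bc card_T by (cases t) simp_all
  then show ?thesis unfolding t_def by simp
qed

definition Y_edge :: "'a set \<Rightarrow> 'a set set \<Rightarrow> 'a \<Rightarrow> 'a \<Rightarrow> bool" where
  "Y_edge V S v w \<longleftrightarrow> v \<in> V \<and> w \<in> V \<and> v \<noteq> w \<and>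
    (\<forall>u \<in> V - {v, w}. odd_triangle S u v w \<and> balanced_pair V S u v)"

lemma Y_set_eq: "Y_set V S = {{v, w} | v w. Y_edge V S v w}"
  unfolding Y_set_def Y_edge_def balanced_pair_def by blast

lemma Y_edgeD:
  assumes "Y_edge V S v w"
  shows "v \<in> V" "w \<in> V" "v \<noteq> w"
    and "u \<in> V - {v, w} \<Longrightarrow> odd_triangle S u v w"
    and "u \<in> V - {v, w} \<Longrightarrow> balanced_pair V S u v"
  using assms unfolding Y_edge_def by auto

lemma Y_edge_not_balanced:
  assumes "finite V" "card V \<ge> 4" "Y_edge V S v w"
  shows "\<not> balanced_pair V S v w"
proof
  assume "balanced_pair V S v w"
  then obtain x where x: "x \<in> V - {v, w}" "\<not> odd_triangle S v w x"
    using balanced_pair_has_even_triangle[OF assms(1,2) Y_edgeD(1-3)[OF assms(3)]] by blast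
  then show False using Y_edgeD(4)[OF assms(3) x(1)] by (simp add: odd_triangle_commute)
qed

lemma Y_edge_twins:
  assumes "Y_edge V S v w" "x \<in> V - {v, w}" "y \<in> V - {v, w}" "x \<noteq> y"
  shows "odd_triangle S x y v \<longleftrightarrow> odd_triangle S x y w"
  using assms odd_triangle_four_points[of x y v w S] unfolding Y_edge_def by auto

lemma Y_edge_root_notin:
  assumes "finite V" "card V \<ge> 4" "Y_edge V S v w" "Y_edge V S v' w'" "{v, w} \<noteq> {v', w'}"
  shows "v \<notin> {v', w'}"
proof
  assume "v \<in> {v', w'}"
  then obtain x where "{v', w'} = {v, x}" "x \<in> V - {v, w}"
    using assms(3-5) unfolding Y_edge_def by auto
  then have "balanced_pair V S v x" and "\<not> balanced_pair V S v x"
    using assms(3) Y_edge_not_balanced[OF assms(1,2,4)]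
    unfolding Y_edge_def by (auto simp: doubleton_eq_iff balanced_pair_commute)
  then show False by simp
qed

lemma Y_edges_disjoint:
  assumes "finite V" "card V \<ge> 4" "Y_edge V S v w" "Y_edge V S v' w'" "{v, w} \<noteq> {v', w'}"
  shows "distinct [v, w, v', w']"
proof -
  have roots: "v \<notin> {v', w'}" "v' \<notin> {v, w}"
    using Y_edge_root_notin[OF assms] Y_edge_root_notin[OF assms(1,2,4,3) not_sym[OF assms(5)]] .
  have "w \<noteq> w'"
  proof
    assume "w = w'"
    have v': "v' \<in> V - {v, w}" using Y_edgeD(1)[OF assms(4)] roots by simp
    have "odd_triangle S v v' x" if x: "x \<in> V - {v, v'}" for x
    proof (cases "x = w")
      case True
      then show ?thesis using Y_edgeD(4)[OF assms(3) v'] by (simp add: odd_triangle_commute)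
    next
      case False
      have "odd_triangle S x v v' \<longleftrightarrow> odd_triangle S x v w'"
        using Y_edge_twins[OF assms(4)] Y_edgeD(1)[OF assms(3)] x False roots \<open>w = w'\<close> by auto
      moreover have "odd_triangle S x v w" using Y_edgeD(4)[OF assms(3)] x False by simp
      ultimately show ?thesis using \<open>w = w'\<close> by (simp add: odd_triangle_commute)
    qed
    moreover have "balanced_pair V S v v'"
      using Y_edgeD(5)[OF assms(3) v'] by (simp add: balanced_pair_commute)
    ultimately show False
      using balanced_pair_has_even_triangle[OF assms(1,2)] Y_edgeD(1)[OF assms(3)] Y_edgeD(1)[OF assms(4)] roots
      by fastforce
  qed
  then show ?thesis using roots Y_edgeD(3)[OF assms(3)] Y_edgeD(3)[OF assms(4)] by auto
qed

lemma Y_edges_cross_parity: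
  assumes "finite V" "Y_edge V S v w" "Y_edge V S v' w'" "distinct [v, w, v', w']"
    and "u \<in> V - {v, w, v', w'}"
  shows "odd_triangle S v v' u \<longleftrightarrow> card V mod 4 = 3"
proof (rule balanced_triangle_odd_iff)
  show "v \<in> V" "v' \<in> V" "u \<in> V" "distinct [v, v', u]"
    using assms(4,5) Y_edgeD(1)[OF assms(2)] Y_edgeD(1)[OF assms(3)] by auto
  have mem: "v' \<in> V - {v, w}" "u \<in> V - {v, w}" "u \<in> V - {v', w'}"
    using \<open>v' \<in> V\<close> assms(4,5) by auto
  show "balanced_pair V S v v'" "balanced_pair V S v u" "balanced_pair V S v' u"
    using Y_edgeD(5)[OF assms(2) mem(1)] Y_edgeD(5)[OF assms(2) mem(2)] Y_edgeD(5)[OF assms(3) mem(3)]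
    by (simp_all add: balanced_pair_commute)
qed fact

lemma Y_edges_card_mod_4:
  assumes "finite V" "card V \<ge> 4" "Y_edge V S v w" "Y_edge V S v' w'" "distinct [v, w, v', w']"
  shows "card V mod 4 = 3"
proof (rule ccontr)
  assume "card V mod 4 \<noteq> 3"
  then have even_across: "\<not> odd_triangle S v v' u" if "u \<in> V - {v, w, v', w'}" for u
    using Y_edges_cross_parity[OF assms(1,3-5) that] by simp
  have in_V: "v \<in> V" "w \<in> V" "v' \<in> V" "w' \<in> V"
    using Y_edgeD(1,2)[OF assms(3)] Y_edgeD(1,2)[OF assms(4)] by auto
  have cross: "v' \<in> V - {v, w}" "v \<in> V - {v', w'}" using in_V assms(5) by auto
  have "odd_triangle S v v' w" "odd_triangle S v v' w'"
    using Y_edgeD(4)[OF assms(3) cross(1)] Y_edgeD(4)[OF assms(4) cross(2)]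
    by (simp_all add: odd_triangle_commute)
  then have "{x \<in> V - {v, v'}. odd_triangle S v v' x} = {w, w'}"
  proof (intro equalityI subsetI)
    fix x assume x: "x \<in> {x \<in> V - {v, v'}. odd_triangle S v v' x}"
    then show "x \<in> {w, w'}" using even_across[of x] by blast
  qed (use in_V assms(5) in auto)
  then have "n_odd_tri V S v v' = 2" using assms(5) unfolding n_odd_tri_def by simp
  moreover have "balanced_pair V S v v'"
    using Y_edgeD(5)[OF assms(3) cross(1)] by (simp add: balanced_pair_commute)
  ultimately have "card V = 5" using balanced_pair_iff_card[OF assms(1) in_V(1,3)] assms(5) by simp
  moreover have "card (V - {v, w, v', w'}) = card V - 4"
    using in_V assms(1,5) by (simp add: card_Diff_subset)
  ultimately have "card (V - {v, w, v', w'}) = 1" by simp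
  then obtain u where u: "V - {v, w, v', w'} = {u}" by (rule card_1_singletonE)
  then have u_R: "u \<in> V - {v, w, v', w'}" by simp
  then have u_V: "u \<in> V" "u \<in> V - {v, w}" "u \<in> V - {v', w'}" "u \<noteq> v" by simp_all
  have "\<not> odd_triangle S u v v'" using even_across[of u] u by (simp add: odd_triangle_commute)
  moreover have "odd_triangle S u v v' \<longleftrightarrow> odd_triangle S u v w'"
    using Y_edge_twins[OF assms(4) u_V(3) cross(2) u_V(4)] .
  moreover have "V - {u, v} = {w, v', w'}"
  proof -
    have "V = insert u {v, w, v', w'}" using u in_V by blast
    then show ?thesis using u_R assms(5) by auto
  qed
  ultimately have "{x \<in> V - {u, v}. odd_triangle S u v x} \<subseteq> {w}" by auto
  then have "n_odd_tri V S u v \<le> 1"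
    unfolding n_odd_tri_def using card_mono[of "{w}"] by fastforce
  moreover have "2 * n_odd_tri V S u v + 1 = card V"
    using Y_edgeD(5)[OF assms(3) u_V(2)] balanced_pair_iff_card[OF assms(1) u_V(1) in_V(1) u_V(4)] by simp
  ultimately show False using \<open>card V = 5\<close> by simp
qed

lemma Y_edge_unique:
  assumes "finite V" "card V \<ge> 4" "Y_edge V S v w" "Y_edge V S v' w'"
  shows "{v, w} = {v', w'}"
proof (rule ccontr)
  assume "{v, w} \<noteq> {v', w'}"
  then have four: "distinct [v, w, v', w']" by (rule Y_edges_disjoint[OF assms])
  have mod_4: "card V mod 4 = 3" by (rule Y_edges_card_mod_4[OF assms four])
  have in_V: "v \<in> V" "v' \<in> V" using Y_edgeD(1)[OF assms(3)] Y_edgeD(1)[OF assms(4)] .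
  have cross: "v' \<in> V - {v, w}" "v \<in> V - {v', w'}" using in_V four by auto
  have "balanced_pair V S v v'"
    using Y_edgeD(5)[OF assms(3) cross(1)] by (simp add: balanced_pair_commute)
  then obtain x where x: "x \<in> V - {v, v'}" "\<not> odd_triangle S v v' x"
    using balanced_pair_has_even_triangle[OF assms(1,2) in_V] four by auto
  then consider "x = w" | "x = w'" | "x \<in> V - {v, w, v', w'}" by auto
  then show False
  proof cases
    case 1
    then show False using Y_edgeD(4)[OF assms(3) cross(1)] x(2) by (simp add: odd_triangle_commute)
  next
    case 2
    then show False using Y_edgeD(4)[OF assms(4) cross(2)] x(2) by (simp add: odd_triangle_commute)
  next
    case 3
    then show False using Y_edges_cross_parity[OF assms(1,3,4) four] mod_4 x(2) by simp
  qed
qed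

theorem lemma3p4:
  fixes V :: "'a set" and \<Sigma> :: "'a set set"
  assumes "finite V" and "card V \<ge> 4" and "\<Sigma> \<subseteq> edges_K V"
  shows "card (Y_set V \<Sigma>) \<le> 1"
proof -
  have "Y_set V \<Sigma> \<subseteq> Pow V" by (auto simp: Y_set_eq Y_edge_def)
  then have "finite (Y_set V \<Sigma>)" using assms(1) by (simp add: finite_subset)
  moreover have "\<forall>e \<in> Y_set V \<Sigma>. \<forall>e' \<in> Y_set V \<Sigma>. e = e'"
    using Y_edge_unique[OF assms(1,2)] unfolding Y_set_eq by blast
  ultimately show ?thesis using card_le_Suc0_iff_eq by auto
qed

end
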